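(* Let $t\ge 2$ and $k_1,\dots,k_t\ge 2$ be integers. If a finite simple graph $G$ contains an induced subgraph isomorphic to the vertex-disjoint union $P_{k_1}\cup P_{k_2}\cup\cdots\cup P_{k_t}$ of paths on $k_1,\dots,k_t$ vertices, then \[\mathrm{mur}(G)\ge \Big(\sum_{i=1}^t k_i\Big)-(t+1).\]
   Context: For a finite simple undirected graph $G$ on vertices $v_1,\dots,v_n$, let $A_G$ be its $(0,1)$-adjacency matrix, $D_G=\mathrm{diag}(d_1,\dots,d_n)$ with $d_i$ the degree of $v_i$, $I$ the $n\times n$ identity matrix and $J$ the $n\times n$ all-ones matrix. A universal adjacency matrix of $G$ is any matrix $\alpha A_G+\beta I+\gamma J+\delta D_G$ with real scalars $\alpha,\beta,\gamma,\delta$ and $\alpha\neq 0$. The minimum universal rank $\mathrm{mur}(G)$ is the minimum rank over all universal adjacency matrices of $G$. *)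

theory Defs
  imports "HOL-Analysis.Analysis"
begin

definition simple_graph :: "('n::finite \<Rightarrow> 'n \<Rightarrow> bool) \<Rightarrow> bool" where
  "simple_graph E \<longleftrightarrow> (\<forall>u v. E u v \<longrightarrow> E v u) \<and> (\<forall>v. \<not> E v v)"

definition adj_matrix :: "('n::finite \<Rightarrow> 'n \<Rightarrow> bool) \<Rightarrow> real^'n^'n" where
  "adj_matrix E = (\<chi> i j. if E i j then 1 else 0)"

definition degree :: "('n::finite \<Rightarrow> 'n \<Rightarrow> bool) \<Rightarrow> 'n \<Rightarrow> nat" where
  "degree E v = card {u. E v u}"

definition degree_matrix :: "('n::finite \<Rightarrow> 'n \<Rightarrow> bool) \<Rightarrow> real^'n^'n" where
  "degree_matrix E = (\<chi> i j. if i = j then real (degree E i) else 0)"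

definition ones_matrix :: "real^'n^'n" where
  "ones_matrix = (\<chi> i j. 1)"

definition universal_adj :: "('n::finite \<Rightarrow> 'n \<Rightarrow> bool) \<Rightarrow> real \<Rightarrow> real \<Rightarrow> real \<Rightarrow> real \<Rightarrow> real^'n^'n" where
  "universal_adj E \<alpha> \<beta> \<gamma> \<delta> =
     \<alpha> *\<^sub>R adj_matrix E + \<beta> *\<^sub>R mat 1 + \<gamma> *\<^sub>R ones_matrix + \<delta> *\<^sub>R degree_matrix E"

definition mur :: "('n::finite \<Rightarrow> 'n \<Rightarrow> bool) \<Rightarrow> nat" where
  "mur E = Min {rank (universal_adj E \<alpha> \<beta> \<gamma> \<delta>) | \<alpha> \<beta> \<gamma> \<delta>. \<alpha> \<noteq> 0}"

text \<open>The vertex-disjoint union of paths P_{k_1},...,P_{k_t} (ks = [k_1,...,k_t]):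
  vertices (i,j) with i < t, j < k_i; (i,j) ~ (i',j') iff i = i' and |j - j'| = 1.\<close>
definition path_union_verts :: "nat list \<Rightarrow> (nat \<times> nat) set" where
  "path_union_verts ks = {(i, j). i < length ks \<and> j < ks ! i}"

definition path_union_adj :: "(nat \<times> nat) \<Rightarrow> (nat \<times> nat) \<Rightarrow> bool" where
  "path_union_adj x y \<longleftrightarrow> fst x = fst y \<and> (snd y = snd x + 1 \<or> snd x = snd y + 1)"

definition has_induced_path_union :: "('n::finite \<Rightarrow> 'n \<Rightarrow> bool) \<Rightarrow> nat list \<Rightarrow> bool" where
  "has_induced_path_union E ks \<longleftrightarrow>
     (\<exists>f. inj_on f (path_union_verts ks) \<and>
          (\<forall>x\<in>path_union_verts ks. \<forall>y\<in>path_union_verts ks.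
              E (f x) (f y) \<longleftrightarrow> path_union_adj x y))"

end

theory Submission
  imports Defs
begin

text \<open>Index the edges of the induced paths by \<open>(i, j)\<close>, \<open>j + 1 < k\<^sub>i\<close>, in lexicographic
  order, and pair the row of vertex \<open>(i, j)\<close> with the column of vertex \<open>(i, j + 1)\<close>.
  If \<open>(i, j)\<close> precedes \<open>(i', j')\<close>, then the vertices \<open>(i, j)\<close> and \<open>(i', j' + 1)\<close> are distinct
  and non-adjacent, so every universal adjacency matrix \<open>\<alpha> A + \<beta> I + \<gamma> J + \<delta> D\<close> has entry
  \<open>\<gamma>\<close> there, whereas the paired entries are \<open>\<alpha> + \<gamma> \<noteq> \<gamma>\<close>. Subtracting the column paired with
  the last edge from the other paired columns leaves \<open>\<Sum> (k\<^sub>i - 1) - 1\<close> columns in triangular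
  position, hence linearly independent.\<close>

lemma triangular_family_scalars_zero:
  fixes v :: "'c \<Rightarrow> real^'m" and F :: "'c \<Rightarrow> 'm" and key :: "'c \<Rightarrow> nat"
  assumes "finite C" and "inj_on key C"
    and diag: "\<And>c. c \<in> C \<Longrightarrow> v c $ F c \<noteq> 0"
    and upper: "\<And>r c. r \<in> C \<Longrightarrow> c \<in> C \<Longrightarrow> key r < key c \<Longrightarrow> v c $ F r = 0"
    and sum_zero: "(\<Sum>c\<in>C. b c *\<^sub>R v c) = 0"
    and "c \<in> C"
  shows "b c = 0"
  using \<open>c \<in> C\<close>
proof (induction "key c" arbitrary: c rule: less_induct)
  case (less c)
  have others: "b c' * (v c' $ F c) = 0" if c': "c' \<in> C - {c}" for c'
  proof (cases "key c' < key c")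
    case True
    then show ?thesis using less.hyps c' by simp
  next
    case False
    with c' less.prems \<open>inj_on key C\<close> have "key c < key c'"
      by (metis DiffE inj_on_eq_iff linorder_neqE_nat singletonI)
    then show ?thesis using upper less.prems c' by simp
  qed
  have "0 = (\<Sum>c'\<in>C. b c' * (v c' $ F c))"
    using arg_cong[OF sum_zero, of "\<lambda>x. x $ F c"] by (simp add: sum_component)
  also have "\<dots> = b c * (v c $ F c)"
    using less.prems \<open>finite C\<close> others by (simp add: sum.remove sum.neutral)
  finally show ?case using diag[OF less.prems] by simp
qed

lemma triangular_family_independent:
  fixes v :: "'c \<Rightarrow> real^'m" and F :: "'c \<Rightarrow> 'm" and key :: "'c \<Rightarrow> nat"
  assumes "finite C" and "inj_on key C"
    and diag: "\<And>c. c \<in> C \<Longrightarrow> v c $ F c \<noteq> 0"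
    and upper: "\<And>r c. r \<in> C \<Longrightarrow> c \<in> C \<Longrightarrow> key r < key c \<Longrightarrow> v c $ F r = 0"
  shows "inj_on v C" and "independent (v ` C)"
proof -
  show inj: "inj_on v C"
  proof (rule inj_onI, rule ccontr)
    fix c c' assume "c \<in> C" "c' \<in> C" "v c = v c'" "c \<noteq> c'"
    then show False
      using \<open>inj_on key C\<close> diag upper
      by (metis inj_on_eq_iff linorder_neqE_nat)
  qed
  show "independent (v ` C)"
  proof (rule independent_if_scalars_zero)
    fix f w assume "(\<Sum>x\<in>v ` C. f x *\<^sub>R x) = 0" and "w \<in> v ` C"
    then obtain c where "c \<in> C" "w = v c" and "(\<Sum>c\<in>C. f (v c) *\<^sub>R v c) = 0"
      by (auto simp: sum.reindex[OF inj])
    then show "f w = 0"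
      using triangular_family_scalars_zero[of C key v F "\<lambda>c. f (v c)" c] assms by simp
  qed (use \<open>finite C\<close> in simp)
qed

lemma card_le_rank_if_triangular_family:
  fixes M :: "real^'n^'m" and v :: "'c \<Rightarrow> real^'m" and F :: "'c \<Rightarrow> 'm" and key :: "'c \<Rightarrow> nat"
  assumes "finite C" and "inj_on key C"
    and "\<And>c. c \<in> C \<Longrightarrow> v c $ F c \<noteq> 0"
    and "\<And>r c. r \<in> C \<Longrightarrow> c \<in> C \<Longrightarrow> key r < key c \<Longrightarrow> v c $ F r = 0"
    and in_range: "\<And>c. c \<in> C \<Longrightarrow> v c \<in> range ((*v) M)"
  shows "card C \<le> rank M"
proof -
  have "card C = card (v ` C)"
    using triangular_family_independent(1)[OF assms(1-4)] by (simp add: card_image)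
  also have "\<dots> \<le> dim (range ((*v) M))"
    using in_range triangular_family_independent(2)[OF assms(1-4)]
    by (intro independent_card_le_dim) auto
  finally show ?thesis by (simp add: rank_dim_range)
qed

lemma card_minus_one_le_rank_if_constant_above_diagonal:
  fixes M :: "real^'n^'m" and row :: "'c \<Rightarrow> 'm" and col :: "'c \<Rightarrow> 'n" and key :: "'c \<Rightarrow> nat"
  assumes "finite R" and "inj_on key R"
    and above: "\<And>r c. r \<in> R \<Longrightarrow> c \<in> R \<Longrightarrow> key r < key c \<Longrightarrow> M $ row r $ col c = g"
    and diag: "\<And>c. c \<in> R \<Longrightarrow> M $ row c $ col c \<noteq> g"
  shows "card R - 1 \<le> rank M"
proof (cases "R = {}")
  case False
  have "Max (key ` R) \<in> key ` R"
    using \<open>finite R\<close> False by (intro Max_in) auto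
  then obtain c0 where c0: "c0 \<in> R" and key_c0: "key c0 = Max (key ` R)"
    by auto
  have below_c0: "key r < key c0" if "r \<in> R - {c0}" for r
    using that c0 key_c0 \<open>inj_on key R\<close> \<open>finite R\<close>
    by (metis DiffE Max_ge finite_imageI image_eqI inj_on_eq_iff le_neq_implies_less singletonI)
  define v where "v c = M *v (axis (col c) 1 - axis (col c0) 1)" for c
  have v_entry: "v c $ x = M $ x $ col c - M $ x $ col c0" for c x
    by (simp add: v_def matrix_vector_mult_diff_distrib matrix_vector_mult_basis column_def)
  have "card (R - {c0}) \<le> rank M"
  proof (rule card_le_rank_if_triangular_family[where v = v and F = row and key = key])
    fix c assume "c \<in> R - {c0}"
    then show "v c $ row c \<noteq> 0"
      using v_entry diag above below_c0 c0 by simp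
  next
    fix r c assume "r \<in> R - {c0}" "c \<in> R - {c0}" "key r < key c"
    then show "v c $ row r = 0"
      using v_entry above below_c0 c0 by simp
  qed (use \<open>finite R\<close> \<open>inj_on key R\<close> inj_on_diff in \<open>auto simp: v_def\<close>)
  then show ?thesis using c0 \<open>finite R\<close> by simp
qed simp

lemma universal_adj_off_diagonal:
  assumes "x \<noteq> y"
  shows "universal_adj E \<alpha> \<beta> \<gamma> \<delta> $ x $ y = (if E x y then \<alpha> else 0) + \<gamma>"
  using assms
  by (simp add: universal_adj_def adj_matrix_def ones_matrix_def degree_matrix_def mat_def)

lemma le_mur:
  assumes "\<And>\<alpha> \<beta> \<gamma> \<delta>. \<alpha> \<noteq> 0 \<Longrightarrow> m \<le> rank (universal_adj E \<alpha> \<beta> \<gamma> \<delta>)"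
  shows "m \<le> mur E"
proof -
  define S where "S = {rank (universal_adj E \<alpha> \<beta> \<gamma> \<delta>) | \<alpha> \<beta> \<gamma> \<delta>. \<alpha> \<noteq> 0}"
  have "S \<subseteq> {..CARD('a)}"
    unfolding S_def by (auto intro: order.trans[OF rank_bound])
  then have "finite S" by (rule finite_subset) simp
  moreover have "rank (universal_adj E 1 0 0 0) \<in> S"
    unfolding S_def by force
  ultimately have "mur E \<in> S"
    unfolding mur_def S_def[symmetric] by (intro Min_in) auto
  then show ?thesis using assms unfolding S_def by auto
qed

lemma lex_less_if_mult_add_less:
  fixes i j i' j' K :: nat
  assumes "j < K" and "j' < K" and "i * K + j < i' * K + j'"
  shows "i < i' \<or> i = i' \<and> j < j'"
proof -
  have "i \<le> i'"
    using div_le_mono[of "i * K + j" "i' * K + j'" K] assms by simp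
  then show ?thesis using assms(3) by auto
qed

lemma mult_add_eq_mult_addD:
  fixes i j i' j' K :: nat
  assumes "j < K" and "j' < K" and "i * K + j = i' * K + j'"
  shows "i = i' \<and> j = j'"
  using arg_cong[OF assms(3), of "\<lambda>n. n div K"] arg_cong[OF assms(3), of "\<lambda>n. n mod K"] assms(1,2)
  by simp

lemma card_path_union_edges:
  assumes "\<forall>k\<in>set ks. k \<ge> 1"
  shows "card {(i, j). i < length ks \<and> Suc j < ks ! i} + length ks = sum_list ks"
proof -
  have "{(i, j). i < length ks \<and> Suc j < ks ! i} = Sigma {..<length ks} (\<lambda>i. {..<ks ! i - 1})"
    by auto
  then have "card {(i, j). i < length ks \<and> Suc j < ks ! i} + length ks
      = (\<Sum>i<length ks. ks ! i - 1 + 1)"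
    by (subst sum.distrib) simp
  also have "\<dots> = (\<Sum>i<length ks. ks ! i)"
    using assms nth_mem by (intro sum.cong) fastforce+
  finally show ?thesis
    by (simp add: sum_list_sum_nth atLeast0LessThan)
qed

lemma rank_universal_adj_ge_path_union:
  assumes "has_induced_path_union E ks" and "\<forall>k\<in>set ks. k \<ge> 1" and "\<alpha> \<noteq> 0"
  shows "sum_list ks - length ks - 1 \<le> rank (universal_adj E \<alpha> \<beta> \<gamma> \<delta>)"
proof -
  define P where "P = path_union_verts ks"
  obtain f where f_inj: "inj_on f P"
    and f_adj: "\<forall>x\<in>P. \<forall>y\<in>P. E (f x) (f y) \<longleftrightarrow> path_union_adj x y"
    using assms(1) unfolding has_induced_path_union_def P_def by blast
  define K where "K = sum_list ks"
  define R where "R = {(i, j). i < length ks \<and> Suc j < ks ! i}"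
  define succ where "succ = (\<lambda>(i::nat, j::nat). (i, Suc j))"
  define key where "key = (\<lambda>(i::nat, j::nat). i * K + j)"
  have j_less_K: "j < K" if "(i, j) \<in> R" for i j
    using that elem_le_sum_list[of i ks] unfolding R_def K_def by auto
  have in_P: "r \<in> P" "succ r \<in> P" if "r \<in> R" for r
    using that unfolding R_def P_def path_union_verts_def succ_def by auto
  have "R \<subseteq> {..<length ks} \<times> {..<K}"
    using j_less_K unfolding R_def by auto
  then have "finite R" by (rule finite_subset) simp
  have "inj_on key R"
  proof (rule inj_onI, clarify)
    fix i j i' j' assume "(i, j) \<in> R" "(i', j') \<in> R" "key (i, j) = key (i', j')"
    then show "i = i' \<and> j = j'"
      using mult_add_eq_mult_addD[OF j_less_K j_less_K] by (metis key_def case_prod_conv)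
  qed
  have "card R - 1 \<le> rank (universal_adj E \<alpha> \<beta> \<gamma> \<delta>)"
  proof (rule card_minus_one_le_rank_if_constant_above_diagonal
      [where row = f and col = "f \<circ> succ" and key = key and g = \<gamma>])
    fix r c assume "r \<in> R" "c \<in> R" "key r < key c"
    moreover obtain i j i' j' where "r = (i, j)" "c = (i', j')" by fastforce
    ultimately have "i < i' \<or> i = i' \<and> j < j'"
      using lex_less_if_mult_add_less[OF j_less_K j_less_K] by (metis key_def case_prod_conv)
    then have "r \<noteq> succ c" "\<not> path_union_adj r (succ c)"
      using \<open>r = (i, j)\<close> \<open>c = (i', j')\<close> by (auto simp: succ_def path_union_adj_def)
    then show "universal_adj E \<alpha> \<beta> \<gamma> \<delta> $ f r $ (f \<circ> succ) c = \<gamma>"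
      using \<open>r \<in> R\<close> \<open>c \<in> R\<close> in_P f_adj f_inj
      by (simp add: universal_adj_off_diagonal inj_on_eq_iff)
  next
    fix c assume "c \<in> R"
    moreover have "c \<noteq> succ c" "path_union_adj c (succ c)"
      by (auto simp: succ_def path_union_adj_def split: prod.splits)
    ultimately show "universal_adj E \<alpha> \<beta> \<gamma> \<delta> $ f c $ (f \<circ> succ) c \<noteq> \<gamma>"
      using in_P f_adj f_inj \<open>\<alpha> \<noteq> 0\<close>
      by (simp add: universal_adj_off_diagonal inj_on_eq_iff)
  qed fact+
  moreover have "card R + length ks = K"
    unfolding R_def K_def using assms(2) by (rule card_path_union_edges)
  ultimately show ?thesis unfolding K_def by linarith
qed

theorem lemma8:
  fixes E :: "'n::finite \<Rightarrow> 'n \<Rightarrow> bool" and ks :: "nat list"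
  assumes "simple_graph E"
    and "length ks \<ge> 2"
    and "\<forall>k\<in>set ks. k \<ge> 2"
    and "has_induced_path_union E ks"
  shows "int (mur E) \<ge> int (sum_list ks) - (int (length ks) + 1)"
proof -
  have "\<forall>k\<in>set ks. k \<ge> 1" using assms(3) by auto
  then have "sum_list ks - length ks - 1 \<le> mur E"
    using assms(4) by (intro le_mur rank_universal_adj_ge_path_union)
  then show ?thesis by linarith
qed

end
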